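(* Let $G_1=(V,E_1)$, $G_2=(V,E_2)$ be a duplex network on a finite node set $V$ with driver budgets $k_1,k_2$, and let $(M_1,M_2)\in\mathcal M_1(k_1)\times\mathcal M_2(k_2)$ be a state. Let $\mathcal P$ be a feasible CLAP from $v_0\in\mathrm{DD}_1$ to $v_k\in\mathrm{DD}_2$ in this state. Applying $\mathcal P$ yields a new state $(M_1',M_2')$ satisfying: (i) $|D(M_1')|=k_1$ and $|D(M_2')|=k_2$; (ii) $\Delta(M_1',M_2')=\Delta(M_1,M_2)-2$; (iii) $|U(M_1',M_2')|=|U(M_1,M_2)|-1$.
   Context: For $\ell\in\{1,2\}$, $\mathcal B_\ell$ is the bipartite graph with vertex classes $V^+=\{v^+\}$, $V^-=\{v^-\}$ and an edge $\{u^+,v^-\}$ for each $(u,v)\in E_\ell$. For a matching $M$ in $\mathcal B_\ell$, $D(M)=\{v\in V: v^-\text{ uncovered by }M\}$, and $|D(M)|=|V|-|M|$. $\mathcal M_\ell(k_\ell)$ is the set of matchings in $\mathcal B_\ell$ of size $|V|-k_\ell$. With $D_\ell=D(M_\ell)$: $U(M_1,M_2)=D_1\cup D_2$, $\mathrm{DD}_1=D_1\setminus D_2$, $\mathrm{DD}_2=D_2\setminus D_1$, $\Delta(M_1,M_2)=|\mathrm{DD}_1|+|\mathrm{DD}_2|$. An $M_\ell$-alternating path is a simple path in $\mathcal B_\ell$ whose edges alternate between $M_\ell$ and non-$M_\ell$. An admissible segment $(u\xrightarrow{\ell}v)$ requires an $M_\ell$-alternating witness path between $u^-$ and $v^-$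 and: for $\ell=1$, $u\in D_1$, $v\notin D_1$; for $\ell=2$, $u\notin D_2$, $v\in D_2$. A CLAP is a sequence of admissible segments $v_0\xrightarrow{\ell_1}v_1\cdots\xrightarrow{\ell_k}v_k$, each with a chosen witness path, with $v_0\in\mathrm{DD}_1$, $v_k\in\mathrm{DD}_2$, consecutive layers different ($\ell_{i+1}\ne\ell_i$), and all $v_i$ distinct. It is feasible if, for each layer $\ell$, the witness paths of its layer-$\ell$ segments are pairwise edge-disjoint. Applying $\mathcal P$ means replacing, for each $\ell$, $M_\ell$ by the symmetric difference $M_\ell\triangle\bigcup E(p)$, where the union runs over the edge sets of the witness paths $p$ of all layer-$\ell$ segments of $\mathcal P$. *)

theory Defs
  imports Main
begin

text \<open>Vertices of the bipartite graph B_l: (v, True) is v^+, (v, False) is v^-.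
  The edge {u^+, v^-} of B_l is identified with the pair (u,v) in E_l.
  Hence a matching of B_l is a set of pairs in E_l with pairwise distinct tails and heads.\<close>

definition matching :: "('v \<times> 'v) set \<Rightarrow> ('v \<times> 'v) set \<Rightarrow> bool" where
  "matching E M \<longleftrightarrow> M \<subseteq> E \<and>
     (\<forall>a b c d. (a, b) \<in> M \<longrightarrow> (c, d) \<in> M \<longrightarrow> (a = c \<or> b = d) \<longrightarrow> (a = c \<and> b = d))"

text \<open>D(M): nodes v whose copy v^- is uncovered by M.\<close>
definition Dset :: "'v set \<Rightarrow> ('v \<times> 'v) set \<Rightarrow> 'v set" where
  "Dset V M = {v \<in> V. \<forall>u. (u, v) \<notin> M}"

text \<open>M_l(k): matchings of B_l of size |V| - k (empty if k > |V|).\<close>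
definition Mset :: "'v set \<Rightarrow> ('v \<times> 'v) set \<Rightarrow> nat \<Rightarrow> ('v \<times> 'v) set set" where
  "Mset V E k = {M. matching E M \<and> int (card M) = int (card V) - int k}"

definition bip_adj :: "('v \<times> 'v) set \<Rightarrow> 'v \<times> bool \<Rightarrow> 'v \<times> bool \<Rightarrow> bool" where
  "bip_adj E x y \<longleftrightarrow> (snd x \<and> \<not> snd y \<and> (fst x, fst y) \<in> E) \<or> (snd y \<and> \<not> snd x \<and> (fst y, fst x) \<in> E)"

definition bedge :: "'v \<times> bool \<Rightarrow> 'v \<times> bool \<Rightarrow> 'v \<times> 'v" where
  "bedge x y = (if snd x then (fst x, fst y) else (fst y, fst x))"

definition path_edges :: "('v \<times> bool) list \<Rightarrow> ('v \<times> 'v) set" where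
  "path_edges p = {bedge (p ! i) (p ! Suc i) | i. Suc i < length p}"

definition alt_path :: "('v \<times> 'v) set \<Rightarrow> ('v \<times> 'v) set \<Rightarrow> ('v \<times> bool) list
    \<Rightarrow> 'v \<times> bool \<Rightarrow> 'v \<times> bool \<Rightarrow> bool" where
  "alt_path E M p x y \<longleftrightarrow> p \<noteq> [] \<and> hd p = x \<and> last p = y \<and> distinct p \<and>
     (\<forall>i. Suc i < length p \<longrightarrow> bip_adj E (p ! i) (p ! Suc i)) \<and>
     (\<forall>i. Suc (Suc i) < length p \<longrightarrow>
        (bedge (p ! i) (p ! Suc i) \<in> M) \<noteq> (bedge (p ! Suc i) (p ! Suc (Suc i)) \<in> M))"

definition sel :: "nat \<Rightarrow> 'a \<Rightarrow> 'a \<Rightarrow> 'a" where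
  "sel l a b = (if l = 1 then a else b)"

definition admissible_seg :: "'v set \<Rightarrow> ('v \<times> 'v) set \<Rightarrow> ('v \<times> 'v) set \<Rightarrow> nat
    \<Rightarrow> 'v \<Rightarrow> 'v \<Rightarrow> ('v \<times> bool) list \<Rightarrow> bool" where
  "admissible_seg V E M l u v p \<longleftrightarrow> alt_path E M p (u, False) (v, False) \<and>
     (if l = 1 then u \<in> Dset V M \<and> v \<notin> Dset V M else u \<notin> Dset V M \<and> v \<in> Dset V M)"

definition DD1 :: "'v set \<Rightarrow> ('v \<times> 'v) set \<Rightarrow> ('v \<times> 'v) set \<Rightarrow> 'v set" where
  "DD1 V M1 M2 = Dset V M1 - Dset V M2"
definition DD2 :: "'v set \<Rightarrow> ('v \<times> 'v) set \<Rightarrow> ('v \<times> 'v) set \<Rightarrow> 'v set" where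
  "DD2 V M1 M2 = Dset V M2 - Dset V M1"
definition Uset :: "'v set \<Rightarrow> ('v \<times> 'v) set \<Rightarrow> ('v \<times> 'v) set \<Rightarrow> 'v set" where
  "Uset V M1 M2 = Dset V M1 \<union> Dset V M2"
definition Delta :: "'v set \<Rightarrow> ('v \<times> 'v) set \<Rightarrow> ('v \<times> 'v) set \<Rightarrow> nat" where
  "Delta V M1 M2 = card (DD1 V M1 M2) + card (DD2 V M1 M2)"

text \<open>A CLAP v_0 -l_1-> v_1 ... -l_k-> v_k: vertices vs = [v_0..v_k], layers ls = [l_1..l_k],
  witness paths ps (ps ! i witnesses the segment from vs ! i to vs ! (i+1) in layer ls ! i).\<close>
definition is_CLAP :: "'v set \<Rightarrow> ('v \<times> 'v) set \<Rightarrow> ('v \<times> 'v) set \<Rightarrow> ('v \<times> 'v) set \<Rightarrow> ('v \<times> 'v) set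
    \<Rightarrow> 'v list \<Rightarrow> nat list \<Rightarrow> ('v \<times> bool) list list \<Rightarrow> bool" where
  "is_CLAP V E1 E2 M1 M2 vs ls ps \<longleftrightarrow>
     length vs = Suc (length ls) \<and> length ps = length ls \<and>
     (\<forall>i < length ls. ls ! i \<in> {1, 2} \<and>
        admissible_seg V (sel (ls ! i) E1 E2) (sel (ls ! i) M1 M2) (ls ! i) (vs ! i) (vs ! Suc i) (ps ! i)) \<and>
     hd vs \<in> DD1 V M1 M2 \<and> last vs \<in> DD2 V M1 M2 \<and>
     (\<forall>i. Suc i < length ls \<longrightarrow> ls ! Suc i \<noteq> ls ! i) \<and>
     distinct vs"

definition feasible_CLAP :: "nat list \<Rightarrow> ('v \<times> bool) list list \<Rightarrow> bool" where
  "feasible_CLAP ls ps \<longleftrightarrow>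
     (\<forall>i j. i < length ls \<longrightarrow> j < length ls \<longrightarrow> i \<noteq> j \<longrightarrow> ls ! i = ls ! j \<longrightarrow>
        path_edges (ps ! i) \<inter> path_edges (ps ! j) = {})"

definition symdiff :: "'a set \<Rightarrow> 'a set \<Rightarrow> 'a set" where
  "symdiff A B = (A - B) \<union> (B - A)"

definition apply_layer :: "('v \<times> 'v) set \<Rightarrow> nat \<Rightarrow> nat list \<Rightarrow> ('v \<times> bool) list list \<Rightarrow> ('v \<times> 'v) set" where
  "apply_layer M l ls ps = symdiff M (\<Union>{path_edges (ps ! i) | i. i < length ls \<and> ls ! i = l})"

end

theory Submission
  imports Defs
begin

(* In each layer, applying the CLAP is a symmetric difference with edge-disjoint alternating
   paths, each leading from a node that is uncovered in that layer to a covered one (layer-2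
   witnesses read backwards). Along one such path the symmetric difference is again a matching
   and the uncovered node moves from the start of the path to its end; edge-disjoint paths can be
   applied one after the other, so the driver sets change by D(M_l') = D(M_l) - starts + ends and
   keep their sizes. Because consecutive segments lie in different layers, every interior node
   of the CLAP is afterwards uncovered in both layers or in neither, while v_0 and v_k leave
   DD_1 and DD_2: Delta drops by 2, and counting the changes of U along the CLAP telescopes
   to -1. *)

definition incident :: "'v \<times> bool \<Rightarrow> 'v \<times> 'v \<Rightarrow> bool" where
  "incident z e \<longleftrightarrow> z = (fst e, True) \<or> z = (snd e, False)"

lemma matching_iff_incident:
  "matching E M \<longleftrightarrow>
     M \<subseteq> E \<and> (\<forall>z e e'. e \<in> M \<longrightarrow> e' \<in> M \<longrightarrow> incident z e \<longrightarrow> incident z e' \<longrightarrow> e = e')"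
proof -
  have "e = e'" if "matching E M" "e \<in> M" "e' \<in> M" "incident z e" "incident z e'" for z e e'
  proof -
    obtain a b c d where e: "e = (a, b)" "e' = (c, d)" by fastforce
    then have "a = c \<or> b = d" using that(4,5) by (auto simp: incident_def)
    then show ?thesis using that(1-3) unfolding e matching_def by blast
  qed
  moreover have "a = c \<and> b = d"
    if "\<forall>z e e'. e \<in> M \<longrightarrow> e' \<in> M \<longrightarrow> incident z e \<longrightarrow> incident z e' \<longrightarrow> e = e'"
      "(a, b) \<in> M" "(c, d) \<in> M" "a = c \<or> b = d" for a b c d
    using that(1)[rule_format, OF that(2,3), of "(a, True)"] that(1)[rule_format, OF that(2,3), of "(b, False)"]
      that(4) by (auto simp: incident_def)
  ultimately show ?thesis
    unfolding matching_def by blast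
qed

lemma matching_incident_unique:
  "matching E M \<Longrightarrow> e \<in> M \<Longrightarrow> e' \<in> M \<Longrightarrow> incident z e \<Longrightarrow> incident z e' \<Longrightarrow> e = e'"
  unfolding matching_iff_incident by blast

lemma Dset_iff_incident: "v \<in> Dset V M \<longleftrightarrow> v \<in> V \<and> {e \<in> M. incident (v, False) e} = {}"
  by (auto simp: Dset_def incident_def)

lemma card_matching_add_card_Dset:
  assumes "finite V" "E \<subseteq> V \<times> V" "matching E M"
  shows "card M + card (Dset V M) = card V"
proof -
  have "M \<subseteq> V \<times> V" using assms(2,3) by (auto simp: matching_def)
  have "inj_on snd M" using assms(3) by (auto simp: matching_def inj_on_def)
  moreover have "snd ` M = V - Dset V M"
    using \<open>M \<subseteq> V \<times> V\<close> by (force simp: Dset_def)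
  ultimately have "card M = card (V - Dset V M)" by (metis card_image)
  also have "\<dots> = card V - card (Dset V M)"
    using assms(1) by (intro card_Diff_subset) (auto simp: Dset_def intro: finite_subset)
  finally show ?thesis
    using card_mono[OF assms(1), of "Dset V M"] by (auto simp: Dset_def)
qed

lemma Mset_iff_card_Dset:
  assumes "finite V" "E \<subseteq> V \<times> V"
  shows "M \<in> Mset V E k \<longleftrightarrow> matching E M \<and> card (Dset V M) = k"
proof (cases "matching E M")
  case True
  then show ?thesis using card_matching_add_card_Dset[OF assms True] by (auto simp: Mset_def)
qed (simp add: Mset_def)

lemma bip_adj_commute: "bip_adj E x y \<Longrightarrow> bip_adj E y x"
  by (auto simp: bip_adj_def)

lemma bedge_commute: "bip_adj E x y \<Longrightarrow> bedge y x = bedge x y"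
  by (auto simp: bip_adj_def bedge_def)

lemma rev_nth_adjacent:
  assumes "Suc i < length p"
  shows "rev p ! i = p ! Suc (length p - 2 - i)" "rev p ! Suc i = p ! (length p - 2 - i)"
  using assms by (auto simp: rev_nth Suc_diff_Suc numeral_2_eq_2)

lemma path_edges_conv_image: "path_edges p = (\<lambda>i. bedge (p ! i) (p ! Suc i)) ` {i. Suc i < length p}"
  by (auto simp: path_edges_def)

lemma bedge_rev_nth:
  assumes "alt_path E M p x y" "Suc i < length p"
  shows "bedge (rev p ! i) (rev p ! Suc i) = bedge (p ! (length p - 2 - i)) (p ! Suc (length p - 2 - i))"
  using assms rev_nth_adjacent[OF assms(2)] bedge_commute[of E "p ! (length p - 2 - i)"]
  by (auto simp: alt_path_def)

lemma path_edges_rev: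
  assumes "alt_path E M p x y"
  shows "path_edges (rev p) = path_edges p"
proof -
  let ?n = "length p" and ?e = "\<lambda>i. bedge (p ! i) (p ! Suc i)" and ?I = "{i. Suc i < length p}"
  have "bedge (rev p ! i) (rev p ! Suc i) = ?e (?n - 2 - i)" if "i \<in> ?I" for i
    using bedge_rev_nth[OF assms, of i] that by simp
  then have "path_edges (rev p) = ?e ` (\<lambda>i. ?n - 2 - i) ` ?I"
    unfolding path_edges_conv_image image_image length_rev by (rule image_cong[OF refl])
  also have "(\<lambda>i. ?n - 2 - i) ` ?I = ?I"
  proof (intro equalityI subsetI)
    fix i assume "i \<in> ?I"
    then show "i \<in> (\<lambda>i. ?n - 2 - i) ` ?I"
      by (intro image_eqI[where x = "?n - 2 - i"]) auto
  qed auto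
  finally show ?thesis by (simp add: path_edges_conv_image)
qed

lemma alt_path_rev:
  assumes "alt_path E M p x y"
  shows "alt_path E M (rev p) y x"
proof -
  let ?n = "length p"
  have adj: "bip_adj E (p ! i) (p ! Suc i)" if "Suc i < ?n" for i
    using assms that by (auto simp: alt_path_def)
  have "bip_adj E (rev p ! i) (rev p ! Suc i)" if "Suc i < ?n" for i
    using rev_nth_adjacent[OF that] adj[of "?n - 2 - i"] that by (auto intro: bip_adj_commute)
  moreover have "(bedge (rev p ! i) (rev p ! Suc i) \<in> M) \<noteq> (bedge (rev p ! Suc i) (rev p ! Suc (Suc i)) \<in> M)"
    if "Suc (Suc i) < ?n" for i
  proof -
    have "?n - 2 - i = Suc (?n - 3 - i)" "?n - 2 - Suc i = ?n - 3 - i" using that by auto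
    then show ?thesis
      using assms that bedge_rev_nth[OF assms, of i] bedge_rev_nth[OF assms, of "Suc i"]
      by (auto simp: alt_path_def)
  qed
  ultimately show ?thesis
    using assms by (auto simp: alt_path_def hd_rev last_rev)
qed

lemma alt_path_cong:
  assumes "\<forall>e\<in>path_edges p. e \<in> M \<longleftrightarrow> e \<in> N"
  shows "alt_path E M p x y \<longleftrightarrow> alt_path E N p x y"
proof -
  have "bedge (p ! i) (p ! Suc i) \<in> M \<longleftrightarrow> bedge (p ! i) (p ! Suc i) \<in> N" if "Suc i < length p" for i
    using assms that by (auto simp: path_edges_conv_image)
  then show ?thesis
    unfolding alt_path_def by simp
qed

locale exposed_alt_path =
  fixes E M :: "('v \<times> 'v) set" and p :: "('v \<times> bool) list" and a b :: 'v
  assumes matching: "matching E M"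
    and alt_path: "alt_path E M p (a, False) (b, False)"
    and exposed: "{e \<in> M. incident (a, False) e} = {}"
    and ends_distinct: "a \<noteq> b"
begin

definition edge :: "nat \<Rightarrow> 'v \<times> 'v" where
  "edge i = bedge (p ! i) (p ! Suc i)"

lemma nth_0: "p ! 0 = (a, False)"
  using alt_path by (auto simp: alt_path_def hd_conv_nth)

lemma nth_last: "p ! (length p - 1) = (b, False)"
  using alt_path by (auto simp: alt_path_def last_conv_nth)

lemma length_ge_2: "2 \<le> length p"
proof -
  have "length p \<noteq> 0" "length p \<noteq> 1"
    using alt_path nth_0 nth_last ends_distinct by (auto simp: alt_path_def)
  then show ?thesis by linarith
qed

lemma nth_eq_iff: "i < length p \<Longrightarrow> j < length p \<Longrightarrow> p ! i = p ! j \<longleftrightarrow> i = j"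
  using alt_path by (auto simp: alt_path_def nth_eq_iff_index_eq)

lemma adjacent: "Suc i < length p \<Longrightarrow> bip_adj E (p ! i) (p ! Suc i)"
  using alt_path by (simp add: alt_path_def)

lemma snd_nth: "i < length p \<Longrightarrow> snd (p ! i) = odd i"
proof (induction i)
  case 0
  then show ?case using nth_0 by simp
next
  case (Suc i)
  then show ?case using adjacent[of i] by (auto simp: bip_adj_def)
qed

lemma odd_length: "odd (length p)"
proof -
  have "even (length p - 1)"
    using snd_nth[of "length p - 1"] nth_last length_ge_2 by simp
  then show ?thesis using length_ge_2 by presburger
qed

lemma odd_index_Suc_less: "odd i \<Longrightarrow> i < length p \<Longrightarrow> Suc i < length p"
  using odd_length by (metis Suc_lessI even_Suc)

lemma edge_in_E: "Suc i < length p \<Longrightarrow> edge i \<in> E"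
  using adjacent[of i] by (auto simp: bip_adj_def edge_def bedge_def)

lemma incident_edge_iff:
  "Suc i < length p \<Longrightarrow> incident z (edge i) \<longleftrightarrow> z = p ! i \<or> z = p ! Suc i"
  using adjacent[of i]
  by (cases "p ! i"; cases "p ! Suc i") (auto simp: bip_adj_def edge_def bedge_def incident_def)

lemma edge_in_M_iff: "Suc i < length p \<Longrightarrow> edge i \<in> M \<longleftrightarrow> odd i"
proof (induction i)
  case 0
  then have "incident (a, False) (edge 0)" using incident_edge_iff nth_0 by simp
  then show ?case using exposed by blast
next
  case (Suc i)
  then show ?case using alt_path by (auto simp: alt_path_def edge_def)
qed

lemma path_edges_eq: "path_edges p = edge ` {i. Suc i < length p}"
  by (simp add: path_edges_conv_image edge_def)

lemma incident_path_edge_imp_in_set: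
  "e \<in> path_edges p \<Longrightarrow> incident z e \<Longrightarrow> z \<in> set p"
  by (auto simp: path_edges_eq incident_edge_iff)

lemma path_edges_at:
  assumes "j < length p"
  shows "{e \<in> path_edges p. incident (p ! j) e} = edge ` {i. Suc i < length p \<and> (i = j \<or> Suc i = j)}"
  using assms by (auto simp: path_edges_eq incident_edge_iff nth_eq_iff)

lemma matching_edges_at:
  assumes "j < length p"
  shows "{e \<in> M. incident (p ! j) e} = (if j = 0 then {} else {edge (if odd j then j else j - 1)})"
proof (cases "j = 0")
  case True
  then show ?thesis using exposed nth_0 by auto
next
  case False
  define i where "i = (if odd j then j else j - 1)"
  have i: "Suc i < length p" "odd i" "i = j \<or> Suc i = j"
    using False assms odd_index_Suc_less by (auto simp: i_def)
  then have "edge i \<in> M" "incident (p ! j) (edge i)"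
    using edge_in_M_iff incident_edge_iff by auto
  then have "{e \<in> M. incident (p ! j) e} = {edge i}"
    using matching_incident_unique[OF matching] by blast
  then show ?thesis using False by (simp add: i_def)
qed

lemma nonmatching_path_edges_at:
  assumes "j < length p"
  shows "{e \<in> path_edges p - M. incident (p ! j) e} =
    (if j = length p - 1 then {} else {edge (if even j then j else j - 1)})"
proof -
  have "{e \<in> path_edges p - M. incident (p ! j) e} = {e \<in> path_edges p. incident (p ! j) e} - M"
    by blast
  also have "\<dots> = edge ` {i. Suc i < length p \<and> (i = j \<or> Suc i = j) \<and> even i}"
    unfolding path_edges_at[OF assms] using edge_in_M_iff by auto
  also have "{i. Suc i < length p \<and> (i = j \<or> Suc i = j) \<and> even i} =
      (if j = length p - 1 then {} else {if even j then j else j - 1})"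
    using assms odd_length by (auto; presburger)
  finally show ?thesis by auto
qed

lemma symdiff_edges_at:
  assumes "j < length p"
  shows "{e \<in> symdiff M (path_edges p). incident (p ! j) e} = {e \<in> path_edges p - M. incident (p ! j) e}"
proof -
  have "{e \<in> M. incident (p ! j) e} \<subseteq> path_edges p"
    using matching_edges_at[OF assms] assms odd_index_Suc_less
    by (auto simp: path_edges_eq)
  then show ?thesis by (auto simp: symdiff_def)
qed

lemma symdiff_edges_off_path:
  "z \<notin> set p \<Longrightarrow> {e \<in> symdiff M (path_edges p). incident z e} = {e \<in> M. incident z e}"
  unfolding symdiff_def using incident_path_edge_imp_in_set by blast

lemma matching_symdiff: "matching E (symdiff M (path_edges p))"
  unfolding matching_iff_incident
proof (intro conjI allI impI)
  show "symdiff M (path_edges p) \<subseteq> E"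
    using matching edge_in_E by (auto simp: matching_def symdiff_def path_edges_eq)
  fix z e e'
  assume e: "e \<in> symdiff M (path_edges p)" "incident z e" and e': "e' \<in> symdiff M (path_edges p)" "incident z e'"
  show "e = e'"
  proof (cases "z \<in> set p")
    case True
    then obtain j where j: "j < length p" "z = p ! j" by (auto simp: in_set_conv_nth)
    then have "{e, e'} \<subseteq> {e \<in> path_edges p - M. incident (p ! j) e}"
      using e e' symdiff_edges_at[OF j(1)] by auto
    moreover have "\<exists>x. {e \<in> path_edges p - M. incident (p ! j) e} \<subseteq> {x}"
      unfolding nonmatching_path_edges_at[OF j(1)] by simp
    ultimately show ?thesis by blast
  next
    case False
    then show ?thesis
      using e e' symdiff_edges_off_path matching_incident_unique[OF matching] by blast
  qed
qed

lemma Dset_symdiff: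
  assumes "E \<subseteq> V \<times> V"
  shows "Dset V (symdiff M (path_edges p)) = insert b (Dset V M - {a})"
proof -
  have "b \<in> V"
  proof -
    have "Suc (length p - 2) < length p" "Suc (length p - 2) = length p - 1"
      using length_ge_2 by auto
    then have "edge (length p - 2) \<in> E" "incident (b, False) (edge (length p - 2))"
      using edge_in_E incident_edge_iff nth_last by auto
    then show ?thesis using assms by (auto simp: incident_def)
  qed
  have "v \<in> Dset V (symdiff M (path_edges p)) \<longleftrightarrow> v \<in> insert b (Dset V M - {a})" for v
  proof (cases "(v, False) \<in> set p")
    case True
    then obtain j where j: "j < length p" "(v, False) = p ! j" by (auto simp: in_set_conv_nth)
    have "v = a \<longleftrightarrow> p ! j = p ! 0" "v = b \<longleftrightarrow> p ! j = p ! (length p - 1)"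
      using j(2) nth_0 nth_last by auto
    moreover have "0 < length p" "length p - 1 < length p" using length_ge_2 by auto
    ultimately have "v = a \<longleftrightarrow> j = 0" "v = b \<longleftrightarrow> j = length p - 1"
      using nth_eq_iff[OF j(1)] by simp_all
    then have "v \<in> Dset V (symdiff M (path_edges p)) \<longleftrightarrow> v = b"
      "v \<in> Dset V M \<longleftrightarrow> v \<in> V \<and> v = a"
      using \<open>b \<in> V\<close> unfolding Dset_iff_incident j(2) symdiff_edges_at[OF j(1)]
        nonmatching_path_edges_at[OF j(1)] matching_edges_at[OF j(1)] by auto
    then show ?thesis by auto
  next
    case False
    moreover have "(a, False) \<in> set p" "(b, False) \<in> set p"
      using alt_path unfolding alt_path_def by (metis hd_in_set, metis last_in_set)
    ultimately have "v \<noteq> a" "v \<noteq> b" by auto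
    then show ?thesis
      using symdiff_edges_off_path[OF False] by (simp add: Dset_iff_incident)
  qed
  then show ?thesis by blast
qed

end

lemma symdiff_alt_path_Mset:
  assumes "finite V" "E \<subseteq> V \<times> V" "M \<in> Mset V E k"
    and "alt_path E M p (a, False) (b, False)" "a \<in> Dset V M" "b \<notin> Dset V M"
  shows "symdiff M (path_edges p) \<in> Mset V E k \<and>
    Dset V (symdiff M (path_edges p)) = insert b (Dset V M - {a})"
proof -
  have M: "matching E M" "card (Dset V M) = k"
    using assms(3) Mset_iff_card_Dset[OF assms(1,2)] by auto
  interpret exposed_alt_path E M p a b
    using M(1) assms(4-6) by unfold_locales (auto simp: Dset_iff_incident)
  have "finite (Dset V M)" using assms(1) by (simp add: Dset_def)
  then have "card (insert b (Dset V M - {a})) = card (Dset V M)"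
    using assms(5,6) card_Suc_Diff1[of "Dset V M" a] by simp
  then show ?thesis
    using matching_symdiff Dset_symdiff[OF assms(2)] M(2) Mset_iff_card_Dset[OF assms(1,2)] by simp
qed

text \<open>Only edge-disjointness is needed: applied one at a time, each later path is still
  alternating for the updated matching and still starts at an exposed vertex.\<close>

lemma symdiff_alt_paths_Mset:
  assumes "finite V" "E \<subseteq> V \<times> V" "M \<in> Mset V E k" "finite J"
    and "\<forall>j\<in>J. alt_path E M (q j) (a j, False) (b j, False)"
    and "a ` J \<subseteq> Dset V M" "b ` J \<inter> Dset V M = {}" "inj_on a J" "inj_on b J"
    and "pairwise (\<lambda>i j. disjnt (path_edges (q i)) (path_edges (q j))) J"
  shows "symdiff M (\<Union>j\<in>J. path_edges (q j)) \<in> Mset V E k \<and>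
    Dset V (symdiff M (\<Union>j\<in>J. path_edges (q j))) = Dset V M - a ` J \<union> b ` J"
  using assms(4-)
proof (induction J rule: finite_induct)
  case empty
  then show ?case using assms(3) by (simp add: symdiff_def)
next
  case (insert j J)
  let ?N = "symdiff M (\<Union>i\<in>J. path_edges (q i))"
  have N: "?N \<in> Mset V E k" "Dset V ?N = Dset V M - a ` J \<union> b ` J"
    using insert.IH insert.prems by (auto simp: pairwise_insert)
  have disj: "path_edges (q j) \<inter> (\<Union>i\<in>J. path_edges (q i)) = {}"
    using insert.prems(6) insert.hyps(2) by (fastforce simp: pairwise_insert disjnt_def)
  have agree: "\<forall>e\<in>path_edges (q j). e \<in> M \<longleftrightarrow> e \<in> ?N"
    using disj by (auto simp: symdiff_def)
  have "alt_path E M (q j) (a j, False) (b j, False)"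
    using insert.prems(1) by simp
  then have "alt_path E ?N (q j) (a j, False) (b j, False)"
    by (simp only: alt_path_cong[OF agree])
  moreover have "a j \<in> Dset V ?N" "b j \<notin> Dset V ?N"
    using N(2) insert.prems(2-5) insert.hyps(2) by auto
  ultimately have step: "symdiff ?N (path_edges (q j)) \<in> Mset V E k"
    "Dset V (symdiff ?N (path_edges (q j))) = insert (b j) (Dset V ?N - {a j})"
    using symdiff_alt_path_Mset[OF assms(1,2) N(1)] by auto
  have "symdiff ?N (path_edges (q j)) = symdiff M (\<Union>i\<in>insert j J. path_edges (q i))"
    using disj by (auto simp: symdiff_def)
  moreover have "insert (b j) (Dset V ?N - {a j}) = Dset V M - a ` insert j J \<union> b ` insert j J"
    using N(2) insert.prems(2,3) by auto
  ultimately show ?case using step by simp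
qed

lemma card_inter_set_eq_sum:
  assumes "distinct xs"
  shows "card (A \<inter> set xs) = (\<Sum>i<length xs. of_bool (xs ! i \<in> A))"
proof -
  have "A \<inter> set xs = (\<lambda>i. xs ! i) ` ({..<length xs} \<inter> {i. xs ! i \<in> A})"
    by (auto simp: in_set_conv_nth)
  moreover have "inj_on (\<lambda>i. xs ! i) {..<length xs}"
    using assms by (simp add: inj_on_def nth_eq_iff_index_eq)
  ultimately show ?thesis by (simp add: card_image inj_on_Int)
qed

lemma card_change_telescope:
  fixes T :: "nat \<Rightarrow> int"
  assumes "distinct xs" "finite A" "finite B" "A - set xs = B - set xs"
    and "\<And>i. i < length xs \<Longrightarrow> of_bool (xs ! i \<in> B) - of_bool (xs ! i \<in> A) = T (Suc i) - T i"
  shows "int (card B) = int (card A) + T (length xs) - T 0"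
proof -
  have card_split: "int (card X) = int (card (X - set xs)) + (\<Sum>i<length xs. of_bool (xs ! i \<in> X))"
    if "finite X" for X
    using card_Int_Diff[OF that, of "set xs"] card_inter_set_eq_sum[OF assms(1), of X] by simp
  have "(\<Sum>i<length xs. of_bool (xs ! i \<in> B) - of_bool (xs ! i \<in> A)) = T (length xs) - T 0"
    using assms(5) sum_lessThan_telescope[of T] by simp
  then show ?thesis
    using card_split[OF assms(2)] card_split[OF assms(3)] assms(4) by (simp add: sum_subtractf)
qed

lemma Delta_eq_card_Un:
  assumes "finite V"
  shows "Delta V M1 M2 = card (DD1 V M1 M2 \<union> DD2 V M1 M2)"
  unfolding Delta_def DD1_def DD2_def
  by (rule card_Un_disjoint[symmetric]) (use assms in \<open>auto simp: Dset_def\<close>)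

definition layer_segments :: "nat list \<Rightarrow> nat \<Rightarrow> nat set" where
  "layer_segments ls l = {i. i < length ls \<and> ls ! i = l}"

lemma in_layer_segments: "i \<in> layer_segments ls l \<longleftrightarrow> i < length ls \<and> ls ! i = l"
  by (simp add: layer_segments_def)

lemma finite_layer_segments: "finite (layer_segments ls l)"
  by (simp add: layer_segments_def)

lemma apply_layer_eq:
  "apply_layer M l ls ps = symdiff M (\<Union>i\<in>layer_segments ls l. path_edges (ps ! i))"
  unfolding apply_layer_def layer_segments_def by (rule arg_cong[where f = "symdiff M"]) blast

locale feasible_clap =
  fixes V :: "'v set" and E1 E2 M1 M2 :: "('v \<times> 'v) set" and k1 k2 :: nat
    and vs :: "'v list" and ls :: "nat list" and ps :: "('v \<times> bool) list list"
  assumes finite_V: "finite V" and E1: "E1 \<subseteq> V \<times> V" and E2: "E2 \<subseteq> V \<times> V"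
    and M1: "M1 \<in> Mset V E1 k1" and M2: "M2 \<in> Mset V E2 k2"
    and clap: "is_CLAP V E1 E2 M1 M2 vs ls ps" and feasible: "feasible_CLAP ls ps"
begin

abbreviation k :: nat where "k \<equiv> length ls"

lemma length_vs: "length vs = Suc k"
  using clap by (simp add: is_CLAP_def)

lemma layer_cases: "i < k \<Longrightarrow> ls ! i = 1 \<or> ls ! i = 2"
  using clap by (auto simp: is_CLAP_def)

lemma interior_layers:
  assumes "0 < i" "i < k"
  shows "ls ! (i - 1) = 1 \<and> ls ! i = 2 \<or> ls ! (i - 1) = 2 \<and> ls ! i = 1"
proof -
  have "ls ! (i - 1) \<noteq> ls ! i"
    using clap assms by (auto simp: is_CLAP_def) (metis Suc_pred)
  moreover have "i - 1 < k" using assms by simp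
  ultimately show ?thesis using layer_cases[of i] layer_cases[of "i - 1"] assms by auto
qed

lemma vs_nonempty: "vs \<noteq> []"
  using length_vs by auto

lemma first_in_DD1: "vs ! 0 \<in> DD1 V M1 M2"
  using clap hd_conv_nth[OF vs_nonempty] by (simp add: is_CLAP_def)

lemma last_in_DD2: "vs ! k \<in> DD2 V M1 M2"
  using clap last_conv_nth[OF vs_nonempty] length_vs by (simp add: is_CLAP_def)

lemma k_pos: "0 < k"
  using first_in_DD1 last_in_DD2 by (auto simp: DD1_def DD2_def)

lemma vs_nth_eq_iff: "i \<le> k \<Longrightarrow> j \<le> k \<Longrightarrow> vs ! i = vs ! j \<longleftrightarrow> i = j"
  using clap length_vs by (simp add: is_CLAP_def nth_eq_iff_index_eq)

lemma segment_layer1: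
  assumes "i < k" "ls ! i = 1"
  shows "alt_path E1 M1 (ps ! i) (vs ! i, False) (vs ! Suc i, False)"
    "vs ! i \<in> Dset V M1" "vs ! Suc i \<notin> Dset V M1"
  using clap assms by (auto simp: is_CLAP_def admissible_seg_def sel_def)

lemma segment_layer2:
  assumes "i < k" "ls ! i = 2"
  shows "alt_path E2 M2 (ps ! i) (vs ! i, False) (vs ! Suc i, False)"
    "vs ! i \<notin> Dset V M2" "vs ! Suc i \<in> Dset V M2"
  using clap assms by (auto simp: is_CLAP_def admissible_seg_def sel_def)

lemma Dset1_nth:
  assumes "i \<le> k"
  shows "vs ! i \<in> Dset V M1 \<longleftrightarrow> i < k \<and> (i = 0 \<or> ls ! i = 1)"
proof -
  consider "i = 0" | "i = k" | "0 < i" "i < k" using assms by linarith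
  then show ?thesis
  proof cases
    case 1
    then show ?thesis using first_in_DD1 k_pos by (simp add: DD1_def)
  next
    case 2
    then show ?thesis using last_in_DD2 by (simp add: DD2_def)
  next
    case 3
    moreover have "i - 1 < k" "Suc (i - 1) = i" using 3 by auto
    ultimately show ?thesis
      using interior_layers[OF 3] segment_layer1[of i] segment_layer1[of "i - 1"] by auto
  qed
qed

lemma Dset2_nth:
  assumes "i \<le> k"
  shows "vs ! i \<in> Dset V M2 \<longleftrightarrow> 0 < i \<and> (i = k \<or> ls ! (i - 1) = 2)"
proof -
  consider "i = 0" | "i = k" | "0 < i" "i < k" using assms by linarith
  then show ?thesis
  proof cases
    case 1
    then show ?thesis using first_in_DD1 by (simp add: DD1_def)
  next
    case 2
    then show ?thesis using last_in_DD2 k_pos by (simp add: DD2_def)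
  next
    case 3
    moreover have "i - 1 < k" "Suc (i - 1) = i" using 3 by auto
    ultimately show ?thesis
      using interior_layers[OF 3] segment_layer2[of i] segment_layer2[of "i - 1"] by auto
  qed
qed

lemma segments_disjoint:
  "pairwise (\<lambda>i j. disjnt (path_edges (ps ! i)) (path_edges (ps ! j))) (layer_segments ls l)"
  using feasible by (auto simp: pairwise_def disjnt_def feasible_CLAP_def layer_segments_def)

lemma inj_on_segment_ends:
  "inj_on (\<lambda>j. vs ! j) (layer_segments ls l)" "inj_on (\<lambda>j. vs ! Suc j) (layer_segments ls l)"
  by (auto simp: inj_on_def layer_segments_def vs_nth_eq_iff)

lemma apply_layer1_Mset_Dset:
  "apply_layer M1 1 ls ps \<in> Mset V E1 k1 \<and>
   Dset V (apply_layer M1 1 ls ps) =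
     Dset V M1 - (\<lambda>j. vs ! j) ` layer_segments ls 1 \<union> (\<lambda>j. vs ! Suc j) ` layer_segments ls 1"
  unfolding apply_layer_eq
  by (rule symdiff_alt_paths_Mset[OF finite_V E1 M1])
    (auto simp: in_layer_segments finite_layer_segments segment_layer1 inj_on_segment_ends
      segments_disjoint)

lemma apply_layer2_Mset_Dset:
  "apply_layer M2 2 ls ps \<in> Mset V E2 k2 \<and>
   Dset V (apply_layer M2 2 ls ps) =
     Dset V M2 - (\<lambda>j. vs ! Suc j) ` layer_segments ls 2 \<union> (\<lambda>j. vs ! j) ` layer_segments ls 2"
proof -
  let ?J = "layer_segments ls 2"
  \<comment> \<open>a layer-2 witness ends at the exposed node, so it is used backwards\<close>
  have rev: "path_edges (rev (ps ! j)) = path_edges (ps ! j)" if "j \<in> ?J" for j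
    using path_edges_rev[OF segment_layer2(1)] that by (simp add: in_layer_segments)
  have "symdiff M2 (\<Union>j\<in>?J. path_edges (rev (ps ! j))) \<in> Mset V E2 k2 \<and>
    Dset V (symdiff M2 (\<Union>j\<in>?J. path_edges (rev (ps ! j)))) =
      Dset V M2 - (\<lambda>j. vs ! Suc j) ` ?J \<union> (\<lambda>j. vs ! j) ` ?J"
    using segments_disjoint[of 2] rev
    by (intro symdiff_alt_paths_Mset[OF finite_V E2 M2])
      (auto simp: in_layer_segments finite_layer_segments segment_layer2 inj_on_segment_ends
        alt_path_rev pairwise_def)
  then show ?thesis unfolding apply_layer_eq using rev by simp
qed

abbreviation M1' where "M1' \<equiv> apply_layer M1 1 ls ps"
abbreviation M2' where "M2' \<equiv> apply_layer M2 2 ls ps"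

lemma nth_vs_in_image_iff:
  assumes "i \<le> k"
  shows "vs ! i \<in> (\<lambda>j. vs ! j) ` layer_segments ls l \<longleftrightarrow> i < k \<and> ls ! i = l"
    "vs ! i \<in> (\<lambda>j. vs ! Suc j) ` layer_segments ls l \<longleftrightarrow> 0 < i \<and> ls ! (i - 1) = l"
proof -
  show "vs ! i \<in> (\<lambda>j. vs ! j) ` layer_segments ls l \<longleftrightarrow> i < k \<and> ls ! i = l"
    using assms vs_nth_eq_iff by (force simp: in_layer_segments)
  show "vs ! i \<in> (\<lambda>j. vs ! Suc j) ` layer_segments ls l \<longleftrightarrow> 0 < i \<and> ls ! (i - 1) = l"
  proof
    assume "vs ! i \<in> (\<lambda>j. vs ! Suc j) ` layer_segments ls l"
    then obtain j where "j < k" "ls ! j = l" "vs ! i = vs ! Suc j"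
      by (auto simp: in_layer_segments)
    then show "0 < i \<and> ls ! (i - 1) = l" using assms vs_nth_eq_iff[of i "Suc j"] by auto
  next
    assume "0 < i \<and> ls ! (i - 1) = l"
    then show "vs ! i \<in> (\<lambda>j. vs ! Suc j) ` layer_segments ls l"
      using assms by (intro image_eqI[of _ _ "i - 1"]) (auto simp: in_layer_segments)
  qed
qed

lemma Dset1'_nth:
  assumes "i \<le> k"
  shows "vs ! i \<in> Dset V M1' \<longleftrightarrow> i = 0 \<and> ls ! 0 = 2 \<or> 0 < i \<and> ls ! (i - 1) = 1"
proof -
  have "vs ! i \<in> Dset V M1' \<longleftrightarrow>
      vs ! i \<in> Dset V M1 \<and> \<not> (i < k \<and> ls ! i = 1) \<or> 0 < i \<and> ls ! (i - 1) = 1"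
    using apply_layer1_Mset_Dset nth_vs_in_image_iff[OF assms] by simp
  then show ?thesis using Dset1_nth[OF assms] layer_cases[OF k_pos] k_pos by auto
qed

lemma Dset2'_nth:
  assumes "i \<le> k"
  shows "vs ! i \<in> Dset V M2' \<longleftrightarrow> i < k \<and> ls ! i = 2 \<or> i = k \<and> ls ! (k - 1) = 1"
proof -
  have "vs ! i \<in> Dset V M2' \<longleftrightarrow>
      vs ! i \<in> Dset V M2 \<and> \<not> (0 < i \<and> ls ! (i - 1) = 2) \<or> i < k \<and> ls ! i = 2"
    using apply_layer2_Mset_Dset nth_vs_in_image_iff[OF assms] by simp
  moreover have "k - 1 < k" using k_pos by simp
  ultimately show ?thesis using Dset2_nth[OF assms] layer_cases[of "k - 1"] by auto
qed

lemma Dset_apply_layers_off_vs: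
  assumes "v \<notin> set vs"
  shows "v \<in> Dset V M1' \<longleftrightarrow> v \<in> Dset V M1" "v \<in> Dset V M2' \<longleftrightarrow> v \<in> Dset V M2"
proof -
  have "v \<notin> (\<lambda>j. vs ! j) ` layer_segments ls l" "v \<notin> (\<lambda>j. vs ! Suc j) ` layer_segments ls l" for l
    using assms length_vs by (auto simp: in_layer_segments)
  then show "v \<in> Dset V M1' \<longleftrightarrow> v \<in> Dset V M1" "v \<in> Dset V M2' \<longleftrightarrow> v \<in> Dset V M2"
    using apply_layer1_Mset_Dset apply_layer2_Mset_Dset by simp_all
qed

lemma DD_Un_apply_layers: "DD1 V M1' M2' \<union> DD2 V M1' M2' = DD1 V M1 M2 \<union> DD2 V M1 M2 - {vs ! 0, vs ! k}"
proof -
  have "v \<in> DD1 V M1' M2' \<union> DD2 V M1' M2' \<longleftrightarrow>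
      v \<in> DD1 V M1 M2 \<union> DD2 V M1 M2 - {vs ! 0, vs ! k}" for v
  proof (cases "v \<in> set vs")
    case True
    then obtain i where i: "i \<le> k" "v = vs ! i" using length_vs by (auto simp: in_set_conv_nth less_Suc_eq_le)
    note Dsets = Dset1_nth[OF i(1)] Dset2_nth[OF i(1)] Dset1'_nth[OF i(1)] Dset2'_nth[OF i(1)]
    consider "i = 0" | "i = k" | "0 < i" "i < k" using i by linarith
    then show ?thesis
    proof cases
      case 3
      then show ?thesis
        using Dsets i interior_layers[OF 3] vs_nth_eq_iff[of i 0] vs_nth_eq_iff[of i k]
        by (auto simp: DD1_def DD2_def)
    qed (use Dsets i k_pos in \<open>auto simp: DD1_def DD2_def\<close>)
  next
    case False
    moreover have "vs ! 0 \<in> set vs" "vs ! k \<in> set vs" using length_vs by simp_all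
    ultimately show ?thesis using Dset_apply_layers_off_vs[OF False] by (auto simp: DD1_def DD2_def)
  qed
  then show ?thesis by blast
qed

lemma Delta_apply_layers: "int (Delta V M1' M2') = int (Delta V M1 M2) - 2"
proof -
  let ?X = "DD1 V M1 M2 \<union> DD2 V M1 M2"
  have X: "finite ?X" "{vs ! 0, vs ! k} \<subseteq> ?X"
    using finite_V first_in_DD1 last_in_DD2 by (auto simp: DD1_def DD2_def Dset_def)
  moreover have ends: "card {vs ! 0, vs ! k} = 2" using vs_nth_eq_iff[of 0 k] k_pos by simp
  moreover have "2 \<le> card ?X" using card_mono[OF X] ends by simp
  ultimately show ?thesis
    unfolding Delta_eq_card_Un[OF finite_V] DD_Un_apply_layers by (simp add: card_Diff_subset of_nat_diff)
qed

text \<open>Along the CLAP, \<open>v\<^sub>0\<close> either leaves U or ends up in both driver sets, \<open>v\<^sub>k\<close>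
  likewise, and an interior node enters U after a layer-1 segment and leaves it after a
  layer-2 segment; these changes telescope with the potential \<open>T\<close> below.\<close>

lemma card_Uset_apply_layers: "int (card (Uset V M1' M2')) = int (card (Uset V M1 M2)) - 1"
proof -
  define T :: "nat \<Rightarrow> int"
    where "T i = (if i = 0 then 1 else if i \<le> k then of_bool (ls ! (i - 1) = 2) else 0)" for i
  have "int (card (Uset V M1' M2')) = int (card (Uset V M1 M2)) + T (length vs) - T 0"
  proof (rule card_change_telescope)
    show "distinct vs" using clap by (simp add: is_CLAP_def)
    show "finite (Uset V M1 M2)" "finite (Uset V M1' M2')"
      using finite_V by (simp_all add: Uset_def Dset_def)
    show "Uset V M1 M2 - set vs = Uset V M1' M2' - set vs"
      using Dset_apply_layers_off_vs by (auto simp: Uset_def)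
    fix i assume "i < length vs"
    then have i: "i \<le> k" using length_vs by simp
    note Dsets = Dset1_nth[OF i] Dset2_nth[OF i] Dset1'_nth[OF i] Dset2'_nth[OF i]
    consider "i = 0" | "i = k" | "0 < i" "i < k" using i by linarith
    then show "of_bool (vs ! i \<in> Uset V M1' M2') - of_bool (vs ! i \<in> Uset V M1 M2) = T (Suc i) - T i"
    proof cases
      case 1
      then show ?thesis
        using Dsets Suc_leI[OF k_pos] layer_cases[OF k_pos] by (auto simp: Uset_def T_def)
    next
      case 2
      moreover have "k - 1 < k" using k_pos by simp
      ultimately show ?thesis using Dsets k_pos layer_cases[of "k - 1"] by (auto simp: Uset_def T_def)
    next
      case 3
      then show ?thesis using Dsets interior_layers[OF 3] by (auto simp: Uset_def T_def)
    qed
  qed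
  then show ?thesis using length_vs by (simp add: T_def)
qed

end

theorem mainTheorem2:
  fixes V :: "'v set" and E1 E2 M1 M2 :: "('v \<times> 'v) set" and k1 k2 :: nat
    and vs :: "'v list" and ls :: "nat list" and ps :: "('v \<times> bool) list list"
  assumes "finite V" and "E1 \<subseteq> V \<times> V" and "E2 \<subseteq> V \<times> V"
    and "M1 \<in> Mset V E1 k1" and "M2 \<in> Mset V E2 k2"
    and "is_CLAP V E1 E2 M1 M2 vs ls ps" and "feasible_CLAP ls ps"
  shows "let M1' = apply_layer M1 1 ls ps; M2' = apply_layer M2 2 ls ps in
           M1' \<in> Mset V E1 k1 \<and> M2' \<in> Mset V E2 k2 \<and>
           card (Dset V M1') = k1 \<and> card (Dset V M2') = k2 \<and>
           int (Delta V M1' M2') = int (Delta V M1 M2) - 2 \<and>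
           int (card (Uset V M1' M2')) = int (card (Uset V M1 M2)) - 1"
proof -
  interpret feasible_clap V E1 E2 M1 M2 k1 k2 vs ls ps
    using assms by unfold_locales
  have "M1' \<in> Mset V E1 k1" "M2' \<in> Mset V E2 k2"
    using apply_layer1_Mset_Dset apply_layer2_Mset_Dset by simp_all
  then have "card (Dset V M1') = k1" "card (Dset V M2') = k2"
    using Mset_iff_card_Dset[OF assms(1,2)] Mset_iff_card_Dset[OF assms(1,3)] by simp_all
  then show ?thesis
    using \<open>M1' \<in> Mset V E1 k1\<close> \<open>M2' \<in> Mset V E2 k2\<close> Delta_apply_layers card_Uset_apply_layers
    unfolding Let_def by simp
qed

end
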